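(* Let $\phi$ be an escort, let $\Delta^{n}_{\circ}=\{x\in\mathbb{R}^n : x_i>0,\ \sum_i x_i=1\}$ be the interior of the probability simplex, and equip $\Delta^n_\circ$ with the escort metric $g^{\phi}_{ij}(x)=\frac{1}{\phi(x_i)}\delta_{ij}$, i.e. $\langle u,w\rangle_x=\sum_{i}\frac{1}{\phi(x_i)}u_iw_i$ for tangent vectors $u,w$ (vectors with $\sum_i u_i=\sum_i w_i=0$). Let $V$ be a $C^1$ function on an open neighbourhood of $\Delta^n_\circ$ in $\mathbb{R}^n$ and let $f=\nabla V$ be its Euclidean gradient. Define $\hat f_{\phi}(x)$ by \[\hat f_{\phi,i}(x)=\phi(x_i)\left(f_i(x)-\mathbb{E}^{\phi}_{x}[f(x)]\right),\qquad i=1,\dots,n.\] Then $\hat f_\phi$ is the gradient of $V|_{\Delta^n_\circ}$ with respect to the escort metric: for every $x\in\Delta^n_\circ$, $\hat f_\phi(x)$ is a tangent vector (i.e. $\sum_i \hat f_{\phi,i}(x)=0$) and $\langle \hat f_\phi(x), z\rangle_x = D_xV(z)$ for every $z\in\mathbb{R}^n$ with $\sum_i z_i=0$.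
   Context: An escort is a continuous function $\phi$ that is strictly positive on $(0,1]$. For $x=(x_1,\dots,x_n)$ the partition function is $Z_\phi(x)=\sum_{i=1}^n\phi(x_i)$, and for a vector $f\in\mathbb{R}^n$ the escort expectation is $\mathbb{E}^{\phi}_{x}[f]=\frac{1}{Z_\phi(x)}\sum_{i=1}^n\phi(x_i)f_i$. *)

theory Defs
  imports "HOL-Analysis.Analysis"
begin

definition escort :: "(real \<Rightarrow> real) \<Rightarrow> bool" where
  "escort \<phi> \<longleftrightarrow> continuous_on {0..1} \<phi> \<and> (\<forall>t\<in>{0<..1}. \<phi> t > 0)"

definition partition_fn :: "(real \<Rightarrow> real) \<Rightarrow> real^'n \<Rightarrow> real" where
  "partition_fn \<phi> x = (\<Sum>i\<in>UNIV. \<phi> (x $ i))"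

definition escort_expectation :: "(real \<Rightarrow> real) \<Rightarrow> real^'n \<Rightarrow> real^'n \<Rightarrow> real" where
  "escort_expectation \<phi> x f = (\<Sum>i\<in>UNIV. \<phi> (x $ i) * f $ i) / partition_fn \<phi> x"

definition simplex_interior :: "(real^'n) set" where
  "simplex_interior = {x. (\<forall>i. x $ i > 0) \<and> (\<Sum>i\<in>UNIV. x $ i) = 1}"

definition escort_inner :: "(real \<Rightarrow> real) \<Rightarrow> real^'n \<Rightarrow> real^'n \<Rightarrow> real^'n \<Rightarrow> real" where
  "escort_inner \<phi> x u w = (\<Sum>i\<in>UNIV. (1 / \<phi> (x $ i)) * u $ i * w $ i)"

definition fhat :: "(real \<Rightarrow> real) \<Rightarrow> (real^'n \<Rightarrow> real^'n) \<Rightarrow> real^'n \<Rightarrow> real^'n" where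
  "fhat \<phi> f x = (\<chi> i. \<phi> (x $ i) * (f x $ i - escort_expectation \<phi> x (f x)))"

end

theory Submission
  imports Defs
begin

text \<open>Multiplying by the metric \<open>1/\<phi>(x\<^sub>i)\<close> cancels the weight \<open>\<phi>(x\<^sub>i)\<close> in \<open>f\<close>-hat,
  so \<open>\<langle>f\<close>-hat\<open>, z\<rangle>\<^sub>x = \<Sum>\<^sub>i (f\<^sub>i - E) z\<^sub>i\<close>, and the constant \<open>E\<close> drops out against tangent
  vectors \<open>z\<close>, leaving the Euclidean pairing \<open>f \<bullet> z = D\<^sub>xV(z)\<close>. Subtracting the escort
  expectation is exactly what makes \<open>f\<close>-hat itself tangent.\<close>

lemma simplex_interior_component_bounds:
  assumes "x \<in> simplex_interior"
  shows "0 < x $ i" and "x $ i \<le> 1"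
proof -
  have pos: "\<And>j. 0 < x $ j" and total: "(\<Sum>j\<in>UNIV. x $ j) = 1"
    using assms by (auto simp: simplex_interior_def)
  show "0 < x $ i" by (rule pos)
  have "x $ i \<le> (\<Sum>j\<in>UNIV. x $ j)"
    by (rule member_le_sum) (auto intro: less_imp_le pos)
  with total show "x $ i \<le> 1" by simp
qed

lemma escort_pos_on_simplex_interior:
  assumes "escort \<phi>" and "x \<in> simplex_interior"
  shows "\<phi> (x $ i) > 0"
  using assms simplex_interior_component_bounds[OF assms(2), of i]
  by (auto simp: escort_def)

lemma sum_fhat_eq_0:
  assumes "partition_fn \<phi> x \<noteq> 0"
  shows "(\<Sum>i\<in>UNIV. fhat \<phi> f x $ i) = 0"
proof -
  have "(\<Sum>i\<in>UNIV. fhat \<phi> f x $ i)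
      = (\<Sum>i\<in>UNIV. \<phi> (x $ i) * f x $ i) - escort_expectation \<phi> x (f x) * partition_fn \<phi> x"
    by (simp add: fhat_def partition_fn_def algebra_simps sum_subtractf sum_distrib_left)
  also have "\<dots> = 0"
    using assms by (simp add: escort_expectation_def)
  finally show ?thesis .
qed

lemma escort_inner_fhat_tangent:
  assumes "\<And>i. \<phi> (x $ i) \<noteq> 0" and "(\<Sum>i\<in>UNIV. z $ i) = 0"
  shows "escort_inner \<phi> x (fhat \<phi> f x) z = f x \<bullet> z"
proof -
  define E where "E = escort_expectation \<phi> x (f x)"
  have "escort_inner \<phi> x (fhat \<phi> f x) z = (\<Sum>i\<in>UNIV. (f x $ i - E) * z $ i)"
    using assms(1) by (simp add: escort_inner_def fhat_def E_def)
  also have "\<dots> = (\<Sum>i\<in>UNIV. f x $ i * z $ i) - E * (\<Sum>i\<in>UNIV. z $ i)"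
    by (simp add: algebra_simps sum_subtractf sum_distrib_left)
  also have "\<dots> = f x \<bullet> z"
    using assms(2) by (simp add: inner_vec_def)
  finally show ?thesis .
qed

theorem mainTheorem1:
  fixes \<phi> :: "real \<Rightarrow> real"
    and V :: "real^'n \<Rightarrow> real"
    and f :: "real^'n \<Rightarrow> real^'n"
    and S :: "(real^'n) set"
  assumes "escort \<phi>"
    and "open S" and "simplex_interior \<subseteq> S"
    and "\<forall>y\<in>S. (V has_derivative (\<lambda>h. f y \<bullet> h)) (at y)"
    and "continuous_on S f"
    and "x \<in> simplex_interior"
  shows "(\<Sum>i\<in>UNIV. fhat \<phi> f x $ i) = 0
    \<and> (\<forall>z::real^'n. (\<Sum>i\<in>UNIV. z $ i) = 0 \<longrightarrow>
          escort_inner \<phi> x (fhat \<phi> f x) z = frechet_derivative V (at x) z)"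
proof -
  have weight_pos: "\<And>i. \<phi> (x $ i) > 0"
    using assms(1,6) by (rule escort_pos_on_simplex_interior)
  then have "partition_fn \<phi> x > 0"
    unfolding partition_fn_def by (intro sum_pos) auto
  then have tangent: "(\<Sum>i\<in>UNIV. fhat \<phi> f x $ i) = 0"
    by (intro sum_fhat_eq_0) simp
  have "frechet_derivative V (at x) = (\<lambda>h. f x \<bullet> h)"
    using assms(3,4,6) by (metis frechet_derivative_at subsetD)
  moreover have "\<And>i. \<phi> (x $ i) \<noteq> 0"
    using weight_pos by (metis less_irrefl)
  ultimately show ?thesis
    using tangent escort_inner_fhat_tangent[of \<phi> x] by simp
qed

end
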